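(* The growth-rate of the family of NSG-compositions with maximum $5$ having a unique part equal to $5$ is at most the growth-rate $\gamma_4$ of the family of NSG-compositions with maximum $4$.
   Context: An NSG-composition is a composition $x_1+\cdots+x_{m-1}$ of positive integers satisfying $x_{s+t}\le x_s+x_t$ and $x_{m-s-t}\le x_{m-s}+x_{m-t}+1$ for all $s,t\ge1$, $s+t<m$ (equivalently, the Kunz vector of a numerical semigroup of multiplicity $m$); its genus is $\sum x_j$ and its maximum is $\max_j x_j$. The growth-rate of a family is $\limsup_{g\to\infty}a_g^{1/g}$ with $a_g$ the number of members of genus $g$. *)

theory Defs
  imports Complex_Main "HOL-Library.Liminf_Limsup" "HOL-Library.Extended_Real"
begin

text \<open>A composition x_1 + ... + x_{m-1} is represented by the list xs = [x_1,...,x_{m-1}],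
  so m = length xs + 1 and x_j = xs ! (j - 1).\<close>

definition nsg_comp :: "nat list \<Rightarrow> bool" where
  "nsg_comp xs \<longleftrightarrow>
     (let m = length xs + 1 in
       (\<forall>x\<in>set xs. 0 < x) \<and>
       (\<forall>s t. 1 \<le> s \<longrightarrow> 1 \<le> t \<longrightarrow> s + t < m \<longrightarrow>
          xs ! (s + t - 1) \<le> xs ! (s - 1) + xs ! (t - 1) \<and>
          xs ! (m - s - t - 1) \<le> xs ! (m - s - 1) + xs ! (m - t - 1) + 1))"

definition genus :: "nat list \<Rightarrow> nat" where
  "genus xs = sum_list xs"

definition comp_max :: "nat list \<Rightarrow> nat" where
  "comp_max xs = Max (set xs)"

definition growth_rate :: "nat list set \<Rightarrow> ereal" where
  "growth_rate F = limsup (\<lambda>g. ereal (root g (real (card {xs \<in> F. genus xs = g}))))"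

end

theory Submission
  imports Defs "HOL-Analysis.Extended_Real_Limits"
begin

text \<open>Lowering the unique part 5 of such a composition to 4 yields an NSG-composition with
  maximum 4 and genus one less: a defining inequality whose right-hand side involves the lowered
  part still holds because that side is at least 4 while every part is now at most 4, and the
  other inequalities only lost weight on their left-hand side. Hence the compositions of genus g
  with a unique 5 are at most g times as many as the compositions of genus g - 1 with maximum 4,
  and the polynomial factor g disappears under the g-th root.\<close>

lemma limsup_root_le_shifted:
  fixes a b :: "nat \<Rightarrow> nat"
  assumes bound: "\<And>g. a g \<le> g * b (g - 1)"
  shows "limsup (\<lambda>g. ereal (root g (a g))) \<le> limsup (\<lambda>g. ereal (root g (b g)))"
proof -
  define v where "v g = root g (b g)" for g
  have root_bound: "root g (a g) \<le> root g g * v (g - 1)" if "2 \<le> g" for g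
  proof -
    have "root g (a g) \<le> root g (g * b (g - 1))"
      using bound[of g] that by (simp add: real_root_le_iff del: of_nat_mult)
    also have "\<dots> = root g g * root g (b (g - 1))" by (simp add: real_root_mult)
    also have "\<dots> \<le> root g g * v (g - 1)"
    proof (rule mult_left_mono)
      \<comment> \<open>root g n \<le> root (g - 1) n needs n = 0 or n \<ge> 1: hence nat-valued sequences\<close>
      show "root g (b (g - 1)) \<le> v (g - 1)"
        using that by (cases "b (g - 1) = 0") (auto simp: v_def intro: real_root_decreasing)
    qed (simp add: real_root_ge_zero)
    finally show ?thesis .
  qed
  have "limsup (\<lambda>g. ereal (root g (a g))) \<le> limsup (\<lambda>g. ereal (root g g) * ereal (v (g - 1)))"
    using root_bound by (intro Limsup_mono) (auto simp: eventually_sequentially)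
  also have "\<dots> = 1 * limsup (\<lambda>g. ereal (v (g - 1)))"
    using LIMSEQ_root by (intro ereal_limsup_lim_mult) (auto simp: one_ereal_def v_def)
  also have "\<dots> = limsup (\<lambda>g. ereal (v g))"
    using limsup_shift[of "\<lambda>g. ereal (v (g - 1))"] by simp
  finally show ?thesis by (simp add: v_def)
qed

lemma growth_rate_le_shifted:
  assumes "\<And>g. card {xs \<in> F. genus xs = g} \<le> g * card {xs \<in> G. genus xs = g - 1}"
  shows "growth_rate F \<le> growth_rate G"
  unfolding growth_rate_def by (rule limsup_root_le_shifted) (rule assms)

lemma nsg_comp_pos: "nsg_comp xs \<Longrightarrow> x \<in> set xs \<Longrightarrow> 0 < x"
  by (simp add: nsg_comp_def)

lemma length_le_sum_list_pos: "(\<And>x. x \<in> set xs \<Longrightarrow> 0 < (x::nat)) \<Longrightarrow> length xs \<le> sum_list xs"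
  by (induction xs) (auto, fastforce)

lemma length_le_genus: "nsg_comp xs \<Longrightarrow> length xs \<le> genus xs"
  by (simp add: genus_def length_le_sum_list_pos nsg_comp_pos)

lemma finite_nsg_comp_genus: "finite {xs. nsg_comp xs \<and> genus xs = g}"
proof (rule finite_subset)
  show "{xs. nsg_comp xs \<and> genus xs = g} \<subseteq> {xs. set xs \<subseteq> {..g} \<and> length xs \<le> g}"
    using length_le_genus member_le_sum_list by (fastforce simp: genus_def)
qed (rule finite_lists_length_le, simp)

lemma lower_unique_max_ineq:
  assumes "i < length xs" "xs ! i = Suc k"
    and others: "\<And>j. j < length xs \<Longrightarrow> j \<noteq> i \<Longrightarrow> xs ! j \<le> k"
    and "p < length xs" "a < length xs" "b < length xs"
    and ineq: "xs ! p \<le> xs ! a + xs ! b + c"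
  shows "xs[i := k] ! p \<le> xs[i := k] ! a + xs[i := k] ! b + c"
proof (cases "a = i \<or> b = i")
  case True
  have "xs[i := k] ! p \<le> k" using assms others[of p] by (cases "p = i") auto
  moreover have "k \<le> xs[i := k] ! a + xs[i := k] ! b" using True assms by auto
  ultimately show ?thesis by linarith
next
  case False
  have "xs[i := k] ! p \<le> xs ! p" using assms by (cases "p = i") auto
  then show ?thesis using False ineq by simp
qed

lemma nsg_comp_lower_unique_max:
  assumes nsg: "nsg_comp xs" and i: "i < length xs" "xs ! i = Suc k" and "0 < k"
    and others: "\<And>j. j < length xs \<Longrightarrow> j \<noteq> i \<Longrightarrow> xs ! j \<le> k"
  shows "nsg_comp (xs[i := k])"
proof -
  have "0 < x" if "x \<in> set (xs[i := k])" for x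
    using that \<open>0 < k\<close> nsg_comp_pos[OF nsg] by (auto dest: set_update_subset_insert[THEN subsetD])
  moreover have "xs[i := k] ! (s + t - 1) \<le> xs[i := k] ! (s - 1) + xs[i := k] ! (t - 1) + 0
      \<and> xs[i := k] ! (m - s - t - 1) \<le> xs[i := k] ! (m - s - 1) + xs[i := k] ! (m - t - 1) + 1"
    if "m = length xs + 1" "1 \<le> s" "1 \<le> t" "s + t < m" for m s t
    using nsg that unfolding nsg_comp_def Let_def
    by (intro conjI lower_unique_max_ineq[OF i others]) auto
  ultimately show ?thesis by (simp add: nsg_comp_def Let_def)
qed

lemma unique_five_lowers_to_max_four:
  assumes "nsg_comp xs" "xs \<noteq> []" "comp_max xs = 5" "length (filter (\<lambda>x. x = 5) xs) = 1"
  obtains ys i where "nsg_comp ys" "ys \<noteq> []" "comp_max ys = 4" "i < length xs"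
    "xs = ys[i := 5]" "genus ys = genus xs - 1"
proof -
  obtain i where i_unique: "{j. j < length xs \<and> xs ! j = 5} = {i}"
    using assms(4) by (auto simp: length_filter_conv_card card_1_singleton_iff)
  then have i: "i < length xs" "xs ! i = 5" by auto
  have "xs ! j \<le> 5" if "j < length xs" for j
    using assms(3) that unfolding comp_max_def by (metis Max_ge finite_set nth_mem)
  with i_unique have others: "xs ! j \<le> 4" if "j < length xs" "j \<noteq> i" for j
    using that by fastforce
  define ys where "ys = xs[i := 4]"
  have "nsg_comp ys"
    unfolding ys_def using assms(1) i others by (intro nsg_comp_lower_unique_max) auto
  moreover have "comp_max ys = 4"
    unfolding comp_max_def ys_def using i others
    by (intro Max_eqI) (auto simp: in_set_conv_nth nth_list_update split: if_splits)
  moreover have "genus ys = genus xs - 1"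
    using i elem_le_sum_list[OF i(1)] by (simp add: ys_def genus_def sum_list_update)
  moreover have "xs = ys[i := 5]" using i by (metis ys_def list_update_id list_update_overwrite)
  moreover have "ys \<noteq> []" using assms(2) by (simp add: ys_def)
  ultimately show ?thesis using that i(1) by blast
qed

lemma card_unique_five_genus_le:
  "card {xs \<in> {xs. nsg_comp xs \<and> xs \<noteq> [] \<and> comp_max xs = 5 \<and>
                   length (filter (\<lambda>x. x = 5) xs) = 1}. genus xs = g}
   \<le> g * card {xs \<in> {xs. nsg_comp xs \<and> xs \<noteq> [] \<and> comp_max xs = 4}. genus xs = g - 1}"
  (is "card ?A \<le> g * card ?B")
proof -
  have finite_B: "finite ?B"
    by (rule finite_subset[OF _ finite_nsg_comp_genus]) auto
  have A_covered: "?A \<subseteq> (\<lambda>(ys, i). ys[i := 5]) ` (?B \<times> {..<g})"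
  proof
    fix xs assume xs: "xs \<in> ?A"
    then have "nsg_comp xs" "xs \<noteq> []" "comp_max xs = 5" "length (filter (\<lambda>x. x = 5) xs) = 1"
      by auto
    then obtain ys i where "nsg_comp ys" "ys \<noteq> []" "comp_max ys = 4" "i < length xs"
      and xs_eq: "xs = ys[i := 5]" and "genus ys = genus xs - 1"
      by (rule unique_five_lowers_to_max_four)
    moreover have "length xs \<le> g" using xs length_le_genus by auto
    ultimately have "(ys, i) \<in> ?B \<times> {..<g}" using xs by auto
    then show "xs \<in> (\<lambda>(ys, i). ys[i := 5]) ` (?B \<times> {..<g})"
      using xs_eq by force
  qed
  have "card ?A \<le> card ((\<lambda>(ys, i). ys[i := 5]) ` (?B \<times> {..<g}))"
    using A_covered finite_B by (intro card_mono) auto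
  also have "\<dots> \<le> card (?B \<times> {..<g})"
    using finite_B by (intro card_image_le) auto
  finally show ?thesis by (simp add: card_cartesian_product mult.commute)
qed

theorem proposition11p2:
  shows "growth_rate {xs. nsg_comp xs \<and> xs \<noteq> [] \<and> comp_max xs = 5 \<and>
                          length (filter (\<lambda>x. x = 5) xs) = 1}
         \<le> growth_rate {xs. nsg_comp xs \<and> xs \<noteq> [] \<and> comp_max xs = 4}"
  by (rule growth_rate_le_shifted) (rule card_unique_five_genus_le)

end
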